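(* Let $X=(X_1,\dots,X_d)$ be a random vector with values in $\{0,1\}^d$ such that $\mathbb{P}(X=x)>0$ for every $x\in\{0,1\}^d$. Let $V_\emptyset$ be the space of almost surely constant real random variables and, for nonempty $A\subseteq D:=\{1,\dots,d\}$, $V_A:=\left(\sum_{B\subsetneq A}V_B\right)^{\perp_A}$, the orthogonal complement taken inside $\mathbb{L}^2_A$. For $A\subseteq D$ let $e_A(X_A):=\dfrac{(-1)^{\sum_{j\in A}X_j}}{\mathbf{P}_A(X_A)}$, with $e_\emptyset(X_\emptyset)=1$. Then $V_A=\mathrm{span}(e_A(X_A))$ for every $A\subseteq D$; in particular $\{e_A(X_A)\}_{A\subseteq D}$ is a basis of the space of real-valued functions of $X$ which is hierarchically orthogonal (i.e. $\mathbb{E}[e_A(X_A)e_B(X_B)]=0$ whenever $B\subsetneq A$).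
   Context: For $A\subseteq D$, $X_A:=(X_i)_{i\in A}$, $\mathbf{P}_A(x_A):=\mathbb{P}(X_A=x_A)$, and $\mathbb{L}^2_A:=\{f(X_A): f:\{0,1\}^{|A|}\to\mathbb{R}\}$, a Hilbert space for the inner product $\langle U,V\rangle:=\mathbb{E}[UV]$; $F^{\perp_A}$ denotes the orthogonal complement of a subspace $F$ in $\mathbb{L}^2_A$. *)

theory Defs
  imports "HOL-Probability.Probability"
begin

text \<open>A point x of {0,1}^d is encoded as the set of coordinates j in D = {1..d}
  with x_j = 1, so the sample space is Pow D and the law of X is a pmf on nat set.
  A real random variable f(X) is encoded by its (canonical) function on Pow D,
  extended by 0 outside Pow D.\<close>

definition RV :: "nat set \<Rightarrow> (nat set \<Rightarrow> real) set" where
  "RV D = {f. \<forall>x. x \<notin> Pow D \<longrightarrow> f x = 0}"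

text \<open>L2_A: random variables of the form g(X_A), X_A being encoded by x \<inter> A.\<close>
definition L2 :: "nat set \<Rightarrow> nat set \<Rightarrow> (nat set \<Rightarrow> real) set" where
  "L2 D A = {f \<in> RV D. \<exists>g. \<forall>x\<in>Pow D. f x = g (x \<inter> A)}"

definition ip :: "nat set pmf \<Rightarrow> (nat set \<Rightarrow> real) \<Rightarrow> (nat set \<Rightarrow> real) \<Rightarrow> real" where
  "ip p f g = measure_pmf.expectation p (\<lambda>x. f x * g x)"

definition orth :: "nat set pmf \<Rightarrow> nat set \<Rightarrow> nat set \<Rightarrow> (nat set \<Rightarrow> real) set
    \<Rightarrow> (nat set \<Rightarrow> real) set" where
  "orth p D A S = {f \<in> L2 D A. \<forall>g\<in>S. ip p f g = 0}"

definition subsum :: "(nat set \<Rightarrow> (nat set \<Rightarrow> real) set) \<Rightarrow> nat set \<Rightarrow> (nat set \<Rightarrow> real) set" where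
  "subsum V A = {h. \<exists>f. (\<forall>B. B \<subset> A \<longrightarrow> f B \<in> V B) \<and> h = (\<lambda>x. \<Sum>B\<in>{B. B \<subset> A}. f B x)}"

definition Vsp :: "nat set pmf \<Rightarrow> nat set \<Rightarrow> nat set \<Rightarrow> (nat set \<Rightarrow> real) set" where
  "Vsp p D = wfrec finite_psubset
     (\<lambda>V A. if A = {} then L2 D {} else orth p D A (subsum V A))"

definition PA :: "nat set pmf \<Rightarrow> nat set \<Rightarrow> nat set \<Rightarrow> real" where
  "PA p A a = measure_pmf.prob p {x. x \<inter> A = a}"

definition eA :: "nat set pmf \<Rightarrow> nat set \<Rightarrow> nat set \<Rightarrow> nat set \<Rightarrow> real" where
  "eA p D A x = (if x \<subseteq> D then (-1) ^ card (x \<inter> A) / PA p A (x \<inter> A) else 0)"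

end

theory Submission
  imports Defs
begin

text \<open>
  Write alt_sum A h for the alternating sum of h over the subsets of A (up to sign the top
  Moebius coefficient of h). Marginalising onto X_A gives E[e_A(X_A) h(X_A)] = alt_sum A h, and
  alt_sum A kills every function of X_B with A not contained in B. This gives the hierarchical
  orthogonality and, taking A maximal among the indices with a nonzero coefficient, the linear
  independence of the e_A. Conversely, a function k of X_B with alt_sum B k = 0 is a sum of
  functions each ignoring one coordinate of B, so subtracting the right multiple of e_B shows by
  induction on B that the e_C with C a subset of B span L2_B. Finally, for f in V_A write
  f = c e_A + r with r in the span of the e_C for C a proper subset of A: then r lies in the sum of
  the V_C, to which both f and e_A are orthogonal, so E[r^2] = 0 and r = 0 since P has full support.
\<close>

definition alt_sum :: "'a set \<Rightarrow> ('a set \<Rightarrow> 'b::comm_ring_1) \<Rightarrow> 'b" where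
  "alt_sum A f = (\<Sum>a\<in>Pow A. (-1) ^ card a * f a)"

lemma alt_sum_cong: "(\<And>a. a \<subseteq> A \<Longrightarrow> f a = g a) \<Longrightarrow> alt_sum A f = alt_sum A g"
  unfolding alt_sum_def by (intro sum.cong) auto

lemma sum_Pow_insert:
  assumes "finite B" "j \<notin> B"
  shows "(\<Sum>a\<in>Pow (insert j B). G a) = (\<Sum>a\<in>Pow B. G a + G (insert j a))"
proof -
  have inj: "inj_on (insert j) (Pow B)"
    using assms(2) by (auto simp: inj_on_def)
  have "(\<Sum>a\<in>Pow (insert j B). G a) = (\<Sum>a\<in>Pow B. G a) + (\<Sum>a\<in>insert j ` Pow B. G a)"
    unfolding Pow_insert by (rule sum.union_disjoint) (use assms in auto)
  also have "(\<Sum>a\<in>insert j ` Pow B. G a) = (\<Sum>a\<in>Pow B. G (insert j a))"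
    by (rule sum.reindex_cong[OF inj refl refl])
  finally show ?thesis by (simp add: sum.distrib)
qed

lemma alt_sum_insert:
  assumes "finite B" "j \<notin> B"
  shows "alt_sum (insert j B) f = alt_sum B (\<lambda>a. f a - f (insert j a))"
  unfolding alt_sum_def sum_Pow_insert[OF assms]
proof (intro sum.cong refl)
  fix a assume "a \<in> Pow B"
  then have "finite a" "j \<notin> a"
    using assms by (auto intro: finite_subset)
  then have "card (insert j a) = Suc (card a)"
    by simp
  then show "(-1) ^ card a * f a + (-1) ^ card (insert j a) * f (insert j a)
      = (-1) ^ card a * (f a - f (insert j a))"
    by (simp add: algebra_simps)
qed

lemma alt_sum_Int_eq_0:
  assumes "finite A" "j \<in> A" "j \<notin> B"
  shows "alt_sum A (\<lambda>a. h (a \<inter> B)) = 0"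
proof -
  have "alt_sum (insert j (A - {j})) (\<lambda>a. h (a \<inter> B))
      = alt_sum (A - {j}) (\<lambda>a. h (a \<inter> B) - h (insert j a \<inter> B))"
    using assms by (intro alt_sum_insert) auto
  moreover have "insert j (A - {j}) = A"
    using assms by auto
  ultimately have "alt_sum A (\<lambda>a. h (a \<inter> B)) = alt_sum (A - {j}) (\<lambda>a. h (a \<inter> B) - h (insert j a \<inter> B))"
    by simp
  also have "\<dots> = 0"
    using assms(3) by (simp add: alt_sum_def)
  finally show ?thesis .
qed

lemma alt_sum_eq_0_imp_sum_of_lower:
  fixes k :: "'a set \<Rightarrow> 'b::comm_ring_1"
  assumes "finite B" "alt_sum B k = 0"
  shows "\<exists>K. \<forall>b\<subseteq>B. k b = (\<Sum>j\<in>B. K j (b - {j}))"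
  using assms
proof (induction B arbitrary: k rule: finite_induct)
  case empty
  then show ?case by (simp add: alt_sum_def)
next
  case (insert j B)
  define k' where "k' = (\<lambda>a. k a - k (insert j a))"
  have "alt_sum B k' = 0"
    using insert by (simp add: alt_sum_insert k'_def)
  with insert.IH obtain K' where K': "\<And>b. b \<subseteq> B \<Longrightarrow> k' b = (\<Sum>i\<in>B. K' i (b - {i}))"
    by blast
  define K where "K i s = (if i = j then k s else if j \<in> s then - K' i (s - {j}) else 0)" for i s
  have "k b = (\<Sum>i\<in>insert j B. K i (b - {i}))" if b: "b \<subseteq> insert j B" for b
  proof -
    have "(\<Sum>i\<in>B. K i (b - {i})) = (\<Sum>i\<in>B. if j \<in> b then - K' i (b - {j} - {i}) else 0)"
      using insert by (intro sum.cong) (auto simp: K_def Diff_insert2[symmetric] insert_commute)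
    also have "\<dots> = (if j \<in> b then - k' (b - {j}) else 0)"
    proof -
      have "b - {j} \<subseteq> B" using b by auto
      then show ?thesis using K' by (simp add: sum_negf)
    qed
    finally have "(\<Sum>i\<in>insert j B. K i (b - {i})) = k (b - {j}) + (if j \<in> b then - k' (b - {j}) else 0)"
      using insert by (simp add: K_def)
    then show ?thesis
      by (auto simp: k'_def insert_absorb)
  qed
  then show ?case by blast
qed

text \<open>No case distinction is needed: for A = {} the sum over proper subsets is the zero
  function, whose orthogonal complement in L2 D {} is all of L2 D {}.\<close>

lemma Vsp_eq:
  assumes "finite A"
  shows "Vsp p D A = orth p D A (subsum (Vsp p D) A)"
proof -
  let ?F = "\<lambda>V A. if A = {} then L2 D {} else orth p D A (subsum V A)"
  have "subsum (cut (wfrec finite_psubset ?F) finite_psubset A) A = subsum (Vsp p D) A"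
    using assms unfolding subsum_def Vsp_def by (simp add: cut_apply finite_psubset_def)
  then have "Vsp p D A = (if A = {} then L2 D {} else orth p D A (subsum (Vsp p D) A))"
    unfolding Vsp_def by (subst wfrec[OF wf_finite_psubset]) simp
  moreover have "orth p D {} (subsum V {}) = L2 D {}" for V
    by (auto simp: orth_def subsum_def ip_def)
  ultimately show ?thesis by auto
qed

lemma Vsp_subset_L2: "finite A \<Longrightarrow> Vsp p D A \<subseteq> L2 D A"
  by (simp add: Vsp_eq orth_def)

lemma L2_scale: "f \<in> L2 D A \<Longrightarrow> (\<lambda>x. c * f x) \<in> L2 D A"
  by (auto simp: L2_def RV_def)

lemma L2_self: "L2 D D = RV D"
  by (auto simp: L2_def Int_absorb2)

locale full_support =
  fixes p :: "nat set pmf" and D :: "nat set"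
  assumes finite_D: "finite D" and set_pmf_p: "set_pmf p = Pow D"
begin

lemma pmf_pos: "x \<subseteq> D \<Longrightarrow> 0 < pmf p x"
  by (rule pmf_positive) (simp add: set_pmf_p)

lemma ip_eq_sum: "ip p f g = (\<Sum>x\<in>Pow D. pmf p x * (f x * g x))"
  unfolding ip_def
  by (subst integral_measure_pmf[where A="Pow D"]) (use finite_D set_pmf_p in auto)

lemma ip_cong_right: "(\<And>x. x \<subseteq> D \<Longrightarrow> g x = g' x) \<Longrightarrow> ip p f g = ip p f g'"
  unfolding ip_eq_sum by (intro sum.cong) auto

lemma ip_scale_left: "ip p (\<lambda>x. c * f x) g = c * ip p f g"
  unfolding ip_eq_sum by (simp add: sum_distrib_left algebra_simps)

lemma ip_diff_left: "ip p (\<lambda>x. f x - g x) h = ip p f h - ip p g h"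
  unfolding ip_eq_sum by (simp add: algebra_simps sum_subtractf)

lemma ip_sum_right: "ip p f (\<lambda>x. \<Sum>i\<in>I. g i x) = (\<Sum>i\<in>I. ip p f (g i))"
  unfolding ip_eq_sum by (simp add: sum_distrib_left sum.swap[of _ I])

lemma ip_self_eq_0:
  assumes "ip p f f = 0" "x \<subseteq> D"
  shows "f x = 0"
proof -
  have "\<forall>y\<in>Pow D. pmf p y * (f y * f y) = 0"
    using assms(1) finite_D by (simp add: ip_eq_sum sum_nonneg_eq_0_iff)
  then have "pmf p x * (f x * f x) = 0"
    using assms(2) by blast
  then show ?thesis
    using pmf_pos[OF assms(2)] by simp
qed

lemma PA_eq_sum: "PA p A a = (\<Sum>x\<in>{x\<in>Pow D. x \<inter> A = a}. pmf p x)"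
proof -
  have "PA p A a = measure_pmf.prob p ({x. x \<inter> A = a} \<inter> set_pmf p)"
    unfolding PA_def by (simp add: measure_Int_set_pmf)
  also have "\<dots> = (\<Sum>x\<in>{x\<in>Pow D. x \<inter> A = a}. pmf p x)"
    by (subst measure_measure_pmf_finite) (use finite_D set_pmf_p in \<open>auto intro!: sum.cong\<close>)
  finally show ?thesis .
qed

lemma PA_pos: "a \<subseteq> A \<Longrightarrow> A \<subseteq> D \<Longrightarrow> 0 < PA p A a"
  unfolding PA_eq_sum
  by (rule sum_pos2[where i=a]) (use finite_D pmf_pos in auto)

lemma sum_pmf_marginal:
  assumes "A \<subseteq> D"
  shows "(\<Sum>x\<in>Pow D. pmf p x * h (x \<inter> A)) = (\<Sum>a\<in>Pow A. PA p A a * h a)"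
proof -
  have "(\<Sum>x\<in>Pow D. pmf p x * h (x \<inter> A)) =
     (\<Sum>a\<in>Pow A. \<Sum>x\<in>{x\<in>Pow D. x \<inter> A = a}. pmf p x * h (x \<inter> A))"
    by (rule sum.group[symmetric]) (use finite_D assms in \<open>auto intro: finite_subset\<close>)
  also have "\<dots> = (\<Sum>a\<in>Pow A. PA p A a * h a)"
    by (simp add: PA_eq_sum sum_distrib_right)
  finally show ?thesis .
qed

lemma eA_Int: "x \<subseteq> D \<Longrightarrow> eA p D A (x \<inter> A) = eA p D A x"
  by (auto simp: eA_def Int_assoc)

lemma eA_in_L2: "eA p D A \<in> L2 D A"
  unfolding L2_def RV_def
  by (auto simp: eA_def intro!: exI[of _ "\<lambda>a. (-1) ^ card a / PA p A a"])

lemma ip_eA_eq_alt_sum: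
  assumes "A \<subseteq> D"
  shows "ip p (eA p D A) (\<lambda>x. h (x \<inter> A)) = alt_sum A h"
proof -
  define F where "F a = (-1) ^ card a / PA p A a * h a" for a
  have "ip p (eA p D A) (\<lambda>x. h (x \<inter> A)) = (\<Sum>x\<in>Pow D. pmf p x * F (x \<inter> A))"
    unfolding ip_eq_sum by (intro sum.cong) (auto simp: eA_def F_def)
  also have "\<dots> = (\<Sum>a\<in>Pow A. PA p A a * F a)"
    by (rule sum_pmf_marginal[OF assms])
  also have "\<dots> = alt_sum A h"
    unfolding alt_sum_def F_def using PA_pos assms
    by (intro sum.cong) (auto simp: less_le)
  finally show ?thesis .
qed

lemma ip_eA_L2_eq_0:
  assumes "B \<subset> A" "A \<subseteq> D" "g \<in> L2 D B"
  shows "ip p (eA p D A) g = 0"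
proof -
  obtain h where h: "\<And>x. x \<subseteq> D \<Longrightarrow> g x = h (x \<inter> B)"
    using assms(3) unfolding L2_def by auto
  obtain j where j: "j \<in> A" "j \<notin> B"
    using assms(1) by auto
  have "finite A"
    using assms(2) finite_D by (rule finite_subset)
  have "ip p (eA p D A) g = ip p (eA p D A) (\<lambda>x. (\<lambda>a. h (a \<inter> B)) (x \<inter> A))"
    using assms(1) by (intro ip_cong_right) (auto simp: h Int_assoc Int_absorb1 psubset_imp_subset)
  also have "\<dots> = alt_sum A (\<lambda>a. h (a \<inter> B))"
    by (rule ip_eA_eq_alt_sum[OF assms(2)])
  also have "\<dots> = 0"
    by (rule alt_sum_Int_eq_0[OF \<open>finite A\<close> j])
  finally show ?thesis .
qed

lemma ip_eA_subsum_eq_0: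
  assumes "A \<subseteq> D" "h \<in> subsum (Vsp p D) A"
  shows "ip p (eA p D A) h = 0"
proof -
  obtain F where F: "\<And>B. B \<subset> A \<Longrightarrow> F B \<in> Vsp p D B" and h: "h = (\<lambda>x. \<Sum>B\<in>{B. B \<subset> A}. F B x)"
    using assms(2) unfolding subsum_def by blast
  have "F B \<in> L2 D B" if "B \<subset> A" for B
    using F[OF that] Vsp_subset_L2 finite_subset[OF _ finite_D] that assms(1) by blast
  then show ?thesis
    unfolding h ip_sum_right using assms(1) by (simp add: ip_eA_L2_eq_0)
qed

lemma alt_sum_eA_self_pos: "A \<subseteq> D \<Longrightarrow> 0 < alt_sum A (eA p D A)"
  unfolding alt_sum_def using finite_D
  by (intro sum_pos) (auto simp: eA_def PA_pos Int_absorb2 finite_subset)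

lemma alt_sum_eA_eq_0:
  assumes "A \<subseteq> D" "\<not> A \<subseteq> C"
  shows "alt_sum A (eA p D C) = 0"
proof -
  obtain j where j: "j \<in> A" "j \<notin> C"
    using assms(2) by auto
  have "finite A"
    using assms(1) finite_D by (rule finite_subset)
  have "alt_sum A (\<lambda>a. (\<lambda>b. (-1) ^ card b / PA p C b) (a \<inter> C)) = 0"
    by (rule alt_sum_Int_eq_0[OF \<open>finite A\<close> j])
  moreover have "alt_sum A (eA p D C) = alt_sum A (\<lambda>a. (\<lambda>b. (-1) ^ card b / PA p C b) (a \<inter> C))"
    using assms(1) by (intro alt_sum_cong) (auto simp: eA_def)
  ultimately show ?thesis by simp
qed

definition e_span :: "nat set \<Rightarrow> (nat set \<Rightarrow> real) set" where
  "e_span B = {f. \<exists>c. \<forall>x. f x = (\<Sum>C\<in>Pow B. c C * eA p D C x)}"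

lemma e_spanI: "(\<And>x. f x = (\<Sum>C\<in>Pow B. c C * eA p D C x)) \<Longrightarrow> f \<in> e_span B"
  unfolding e_span_def by blast

lemma e_spanE:
  assumes "f \<in> e_span B"
  obtains c where "f = (\<lambda>x. \<Sum>C\<in>Pow B. c C * eA p D C x)"
  using assms unfolding e_span_def by blast

lemma e_span_add: "f \<in> e_span B \<Longrightarrow> g \<in> e_span B \<Longrightarrow> (\<lambda>x. f x + g x) \<in> e_span B"
  by (elim e_spanE, rule e_spanI[where c="\<lambda>C. _ C + _ C"]) (simp add: sum.distrib distrib_right)

lemma e_span_sum:
  assumes "finite J" "\<And>j. j \<in> J \<Longrightarrow> F j \<in> e_span B"
  shows "(\<lambda>x. \<Sum>j\<in>J. F j x) \<in> e_span B"
  using assms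
proof (induction J rule: finite_induct)
  case empty
  show ?case by (rule e_spanI[where c="\<lambda>_. 0"]) simp
next
  case (insert j J)
  then show ?case by (simp add: e_span_add)
qed

lemma e_span_mono:
  assumes "B' \<subseteq> B" "finite B"
  shows "e_span B' \<subseteq> e_span B"
proof
  fix f assume "f \<in> e_span B'"
  then obtain c where f: "f = (\<lambda>x. \<Sum>C\<in>Pow B'. c C * eA p D C x)"
    by (rule e_spanE)
  show "f \<in> e_span B"
  proof (rule e_spanI[where c="\<lambda>C. if C \<subseteq> B' then c C else 0"])
    fix x
    have "f x = (\<Sum>C\<in>Pow B'. (if C \<subseteq> B' then c C else 0) * eA p D C x)"
      by (simp add: f)
    also have "\<dots> = (\<Sum>C\<in>Pow B. (if C \<subseteq> B' then c C else 0) * eA p D C x)"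
      using assms by (intro sum.mono_neutral_left) auto
    finally show "f x = \<dots>" .
  qed
qed

lemma scaled_eA_in_e_span:
  assumes "finite B"
  shows "(\<lambda>x. k * eA p D B x) \<in> e_span B"
proof (rule e_spanI[where c="\<lambda>C. if C = B then k else 0"])
  fix x
  have "(\<Sum>C\<in>Pow B. (if C = B then k else 0) * eA p D C x)
      = (\<Sum>C\<in>Pow B. if C = B then k * eA p D C x else 0)"
    by (intro sum.cong) auto
  also have "\<dots> = k * eA p D B x"
    using assms by (simp add: sum.delta)
  finally show "k * eA p D B x = (\<Sum>C\<in>Pow B. (if C = B then k else 0) * eA p D C x)" ..
qed

lemma L2_eq_eA_plus_lower:
  assumes "B \<subseteq> D" "finite B" "f \<in> L2 D B"
  obtains \<kappa> F where "\<And>j. j \<in> B \<Longrightarrow> F j \<in> L2 D (B - {j})"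
    and "f = (\<lambda>x. \<kappa> * eA p D B x + (\<Sum>j\<in>B. F j x))"
proof -
  obtain g where RV: "f \<in> RV D" and g: "\<And>x. x \<subseteq> D \<Longrightarrow> f x = g (x \<inter> B)"
    using assms(3) unfolding L2_def by auto
  define \<kappa> where "\<kappa> = alt_sum B g / alt_sum B (eA p D B)"
  define k where "k b = g b - \<kappa> * eA p D B b" for b
  have "alt_sum B k = alt_sum B g - \<kappa> * alt_sum B (eA p D B)"
    by (simp add: alt_sum_def k_def algebra_simps sum_subtractf sum_distrib_left)
  also have "\<dots> = 0"
    using alt_sum_eA_self_pos[OF assms(1)] by (simp add: \<kappa>_def)
  finally obtain K where K: "\<And>b. b \<subseteq> B \<Longrightarrow> k b = (\<Sum>j\<in>B. K j (b - {j}))"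
    using alt_sum_eq_0_imp_sum_of_lower[OF assms(2)] by blast
  define F where "F j x = (if x \<subseteq> D then K j (x \<inter> (B - {j})) else 0)" for j x
  have "F j \<in> L2 D (B - {j})" for j
    unfolding L2_def RV_def F_def by auto
  moreover have "f = (\<lambda>x. \<kappa> * eA p D B x + (\<Sum>j\<in>B. F j x))"
  proof
    fix x
    show "f x = \<kappa> * eA p D B x + (\<Sum>j\<in>B. F j x)"
    proof (cases "x \<subseteq> D")
      case True
      then have "f x = k (x \<inter> B) + \<kappa> * eA p D B x"
        by (simp add: g k_def eA_Int)
      also have "k (x \<inter> B) = (\<Sum>j\<in>B. F j x)"
        using True by (simp add: K F_def Int_Diff)
      finally show ?thesis by simp
    next
      case False
      then show ?thesis
        using RV by (simp add: RV_def F_def eA_def)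
    qed
  qed
  ultimately show ?thesis
    using that by blast
qed

lemma L2_subset_e_span:
  assumes "B \<subseteq> D"
  shows "L2 D B \<subseteq> e_span B"
proof -
  have "finite B"
    using assms finite_D by (rule finite_subset)
  then show ?thesis
    using assms
  proof (induction B rule: finite_psubset_induct)
    case (psubset B)
    show ?case
    proof
      fix f assume "f \<in> L2 D B"
      then obtain \<kappa> F where F: "\<And>j. j \<in> B \<Longrightarrow> F j \<in> L2 D (B - {j})"
        and f: "f = (\<lambda>x. \<kappa> * eA p D B x + (\<Sum>j\<in>B. F j x))"
        using L2_eq_eA_plus_lower psubset.prems psubset.hyps by blast
      have "F j \<in> e_span B" if "j \<in> B" for j
      proof -
        have "F j \<in> e_span (B - {j})"
          using that F psubset.prems by (intro subsetD[OF psubset.IH]) auto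
        also have "\<dots> \<subseteq> e_span B"
          using psubset.hyps by (intro e_span_mono) auto
        finally show ?thesis .
      qed
      then show "f \<in> e_span B"
        unfolding f using psubset.hyps by (intro e_span_add e_span_sum scaled_eA_in_e_span)
    qed
  qed
qed

lemma eA_linear_independent:
  assumes zero: "\<And>x. x \<subseteq> D \<Longrightarrow> (\<Sum>C\<in>Pow D. c C * eA p D C x) = 0" and "A \<subseteq> D"
  shows "c A = 0"
proof (rule ccontr)
  assume "c A \<noteq> 0"
  then obtain M where M: "M \<in> {C\<in>Pow D. c C \<noteq> 0}" and max: "\<And>C. C \<in> {C\<in>Pow D. c C \<noteq> 0} \<Longrightarrow> M \<subseteq> C \<Longrightarrow> M = C"
    using finite_has_maximal[of "{C\<in>Pow D. c C \<noteq> 0}"] finite_D \<open>A \<subseteq> D\<close> by fastforce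
  have vanish: "c C * alt_sum M (eA p D C) = 0" if "C \<in> Pow D - {M}" for C
    using M max that by (cases "M \<subseteq> C") (auto simp: alt_sum_eA_eq_0)
  have "0 = alt_sum M (\<lambda>_. 0)"
    by (simp add: alt_sum_def)
  also have "\<dots> = alt_sum M (\<lambda>x. \<Sum>C\<in>Pow D. c C * eA p D C x)"
    using M by (intro alt_sum_cong zero[symmetric]) auto
  also have "\<dots> = (\<Sum>C\<in>Pow D. c C * alt_sum M (eA p D C))"
    unfolding alt_sum_def by (simp add: sum_distrib_left sum.swap[of _ "Pow D"] algebra_simps)
  also have "\<dots> = c M * alt_sum M (eA p D M) + (\<Sum>C\<in>Pow D - {M}. c C * alt_sum M (eA p D C))"
    using M finite_D by (intro sum.remove) auto
  also have "\<dots> = c M * alt_sum M (eA p D M)"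
    using vanish by (simp add: sum.neutral)
  finally show False
    using M alt_sum_eA_self_pos[of M] by simp
qed

lemma scaled_eA_in_Vsp:
  assumes "A \<subseteq> D"
  shows "(\<lambda>x. c * eA p D A x) \<in> Vsp p D A"
proof -
  have "finite A"
    using assms finite_D by (rule finite_subset)
  moreover have "ip p (\<lambda>x. c * eA p D A x) h = 0" if "h \<in> subsum (Vsp p D) A" for h
    using ip_eA_subsum_eq_0[OF assms that] by (simp add: ip_scale_left)
  ultimately show ?thesis
    by (simp add: Vsp_eq orth_def L2_scale eA_in_L2)
qed

lemma Vsp_imp_scaled_eA:
  assumes "A \<subseteq> D" "f \<in> Vsp p D A"
  shows "\<exists>c. f = (\<lambda>x. c * eA p D A x)"
proof -
  have "finite A"
    using assms(1) finite_D by (rule finite_subset)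
  then have f_orth: "f \<in> orth p D A (subsum (Vsp p D) A)"
    using assms(2) by (simp add: Vsp_eq)
  then have "f \<in> e_span A"
    using L2_subset_e_span[OF assms(1)] by (auto simp: orth_def)
  then obtain c where c: "f = (\<lambda>x. \<Sum>C\<in>Pow A. c C * eA p D C x)"
    by (rule e_spanE)
  define r where "r = (\<lambda>x. \<Sum>C\<in>{C. C \<subset> A}. c C * eA p D C x)"
  have "finite {C. C \<subset> A}"
    by (rule finite_subset[of _ "Pow A"]) (use \<open>finite A\<close> in auto)
  moreover have "Pow A = insert A {C. C \<subset> A}"
    by auto
  ultimately have f_split: "f = (\<lambda>x. c A * eA p D A x + r x)"
    unfolding c r_def by simp
  have "r \<in> subsum (Vsp p D) A"
    unfolding subsum_def r_def using assms(1)
    by (auto intro!: exI[of _ "\<lambda>C x. c C * eA p D C x"] scaled_eA_in_Vsp)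
  then have "ip p f r = 0" "ip p (eA p D A) r = 0"
    using f_orth ip_eA_subsum_eq_0[OF assms(1)] by (auto simp: orth_def)
  moreover have "r = (\<lambda>x. f x - c A * eA p D A x)"
    using f_split by auto
  ultimately have "ip p r r = 0"
    by (simp add: ip_diff_left ip_scale_left)
  have "r x = 0" for x
  proof (cases "x \<subseteq> D")
    case True
    then show ?thesis
      using ip_self_eq_0[OF \<open>ip p r r = 0\<close>] by blast
  next
    case False
    then show ?thesis
      by (simp add: r_def eA_def)
  qed
  then show ?thesis
    using f_split by auto
qed

lemma Vsp_eq_span_eA:
  assumes "A \<subseteq> D"
  shows "Vsp p D A = {(\<lambda>x. c * eA p D A x) | c. True}"
  using Vsp_imp_scaled_eA[OF assms] scaled_eA_in_Vsp[OF assms] by blast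

lemma RV_eA_expansion:
  assumes "f \<in> RV D"
  shows "\<exists>!c. (\<forall>A. \<not> A \<subseteq> D \<longrightarrow> c A = 0) \<and> f = (\<lambda>x. \<Sum>A\<in>Pow D. c A * eA p D A x)"
proof -
  have "f \<in> L2 D D"
    using assms by (simp add: L2_self)
  then have "f \<in> e_span D"
    by (rule subsetD[OF L2_subset_e_span[OF subset_refl]])
  then obtain c where c: "f = (\<lambda>x. \<Sum>A\<in>Pow D. c A * eA p D A x)"
    by (rule e_spanE)
  let ?c = "\<lambda>A. if A \<subseteq> D then c A else 0"
  show ?thesis
  proof (rule ex1I[of _ ?c])
    show "(\<forall>A. \<not> A \<subseteq> D \<longrightarrow> ?c A = 0) \<and> f = (\<lambda>x. \<Sum>A\<in>Pow D. ?c A * eA p D A x)"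
      by (simp add: c)
  next
    fix c' assume c': "(\<forall>A. \<not> A \<subseteq> D \<longrightarrow> c' A = 0) \<and> f = (\<lambda>x. \<Sum>A\<in>Pow D. c' A * eA p D A x)"
    have "(\<Sum>A\<in>Pow D. (c' A - c A) * eA p D A x) = 0" for x
      using c' c by (simp add: left_diff_distrib sum_subtractf fun_eq_iff)
    then have "c' A - c A = 0" if "A \<subseteq> D" for A
      using that by (rule eA_linear_independent)
    then show "c' = ?c"
      using c' by auto
  qed
qed

end

theorem proposition4:
  fixes d :: nat and p :: "nat set pmf"
  defines "D \<equiv> {1..d}"
  assumes "set_pmf p = Pow D"
  shows "(\<forall>A. A \<subseteq> D \<longrightarrow> Vsp p D A = {(\<lambda>x. c * eA p D A x) | c. True})
    \<and> (\<forall>f\<in>RV D. \<exists>!c. (\<forall>A. \<not> A \<subseteq> D \<longrightarrow> c A = 0)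
                        \<and> f = (\<lambda>x. \<Sum>A\<in>Pow D. c A * eA p D A x))
    \<and> (\<forall>A B. A \<subseteq> D \<longrightarrow> B \<subset> A \<longrightarrow> ip p (eA p D A) (eA p D B) = 0)"
proof -
  interpret full_support p D
    by unfold_locales (use assms in \<open>simp_all add: D_def\<close>)
  have "\<forall>A. A \<subseteq> D \<longrightarrow> Vsp p D A = {(\<lambda>x. c * eA p D A x) | c. True}"
    by (simp add: Vsp_eq_span_eA)
  moreover have "\<forall>f\<in>RV D. \<exists>!c. (\<forall>A. \<not> A \<subseteq> D \<longrightarrow> c A = 0)
                        \<and> f = (\<lambda>x. \<Sum>A\<in>Pow D. c A * eA p D A x)"
    by (simp add: RV_eA_expansion)
  moreover have "\<forall>A B. A \<subseteq> D \<longrightarrow> B \<subset> A \<longrightarrow> ip p (eA p D A) (eA p D B) = 0"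
    by (simp add: ip_eA_L2_eq_0 eA_in_L2)
  ultimately show ?thesis
    by blast
qed

end
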